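(* Let $B>1$, $p>0$, $c_B>0$, and $\alpha\in\mathbb{R}$ with $4p+2-\alpha>0$. For integers $j$ let $N_j=c_BB^{2j}$ and $K_j^M(\alpha)=\frac1{N_j}\sum_{l\ge1}f_p^2(l/B^j)(2l+1)l^{-\alpha}$ with $f_p(x)=x^{2p}e^{-x^2}$, and let $$I_{p,s}(\alpha)=\frac{2}{c_B}\int_0^\infty t^{4p+1-\alpha}e^{-2t^2}(\log t)^s\,dt,\qquad s=0,1,2.$$ Then $I_{p,0}(\alpha)=\frac{2^{-(2p-\frac{\alpha}{2}+1)}}{c_B}\Gamma\big(2p+1-\frac{\alpha}{2}\big)$ and, as $j\to\infty$, $$K_j^M(\alpha)=\big(I_{p,0}(\alpha)+o(1)\big)B^{-\alpha j},$$ $$\frac{d}{d\alpha}K_j^M(\alpha)=-\Big(j\log B+\frac{I_{p,1}(\alpha)}{I_{p,0}(\alpha)}+o(1)\Big)K_j^M(\alpha),$$ $$\frac{d^2}{d\alpha^2}K_j^M(\alpha)=\Big(j^2\log^2B+2j\log B\,\frac{I_{p,1}(\alpha)}{I_{p,0}(\alpha)}+\frac{I_{p,2}(\alpha)}{I_{p,0}(\alpha)}+o(1)\Big)K_j^M(\alpha).$$ *)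

theory Defs
  imports "HOL-Analysis.Analysis"
begin

definition fp :: "real \<Rightarrow> real \<Rightarrow> real" where
  "fp p x = x powr (2 * p) * exp (- (x ^ 2))"

definition Nj :: "real \<Rightarrow> real \<Rightarrow> nat \<Rightarrow> real" where
  "Nj cB B j = cB * B ^ (2 * j)"

definition KM :: "real \<Rightarrow> real \<Rightarrow> real \<Rightarrow> nat \<Rightarrow> real \<Rightarrow> real" where
  "KM p cB B j \<alpha> = (1 / Nj cB B j) *
     (\<Sum>l. (fp p (real (Suc l) / B ^ j))\<^sup>2 * (2 * real (Suc l) + 1) * real (Suc l) powr (- \<alpha>))"

definition Ips :: "real \<Rightarrow> real \<Rightarrow> nat \<Rightarrow> real \<Rightarrow> real" where
  "Ips p cB s \<alpha> = (2 / cB) *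
     integral {0<..} (\<lambda>t. t powr (4 * p + 1 - \<alpha>) * exp (- 2 * t ^ 2) * (ln t) ^ s)"

end

theory Submission
  imports Defs "HOL-Real_Asymp.Real_Asymp"
begin

text \<open>Put \<open>h = B^-j\<close>, \<open>a = 4p + 1 - \<alpha>\<close> and \<open>g_b(t) = t^b e^(-2t^2)\<close>. Substituting
  \<open>y = l h\<close> and using \<open>2l + 1 = 2y/h + 1\<close> gives
  \<open>c_B h^-\<alpha> K_j^M(\<alpha>) = 2h \<Sum>_l g_a(lh) + h^2 \<Sum>_l g_(a-1)(lh)\<close>: a right-endpoint Riemann sum
  for \<open>c_B I_{p,0}(\<alpha>)\<close> plus a small term. Since \<open>g_a\<close> is integrable at \<open>0\<close>, decays like
  \<open>t^-2\<close> and has derivative \<open>O(t^-\<beta>)\<close> for some \<open>1 < \<beta> < 2\<close>, the Riemann sum is within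
  \<open>O(h^(2-\<beta>))\<close> of the integral; this error decays geometrically in \<open>j\<close>, so it stays
  negligible even after multiplication by \<open>j\<close>. Differentiating under the sum multiplies the
  \<open>l\<close>-th term by \<open>-ln l = -(ln (lh) + j ln B)\<close>, which produces the same Riemann sums with an
  extra factor \<open>(ln t)^s\<close>, hence the expansions involving \<open>I_{p,1}\<close> and \<open>I_{p,2}\<close>. The
  value of \<open>I_{p,0}\<close> is a Gamma integral after substituting \<open>u = 2t^2\<close>.\<close>

section \<open>Riemann sums with a power-law error\<close>

lemma bounded_on_pos_if_tendsto_0:
  fixes f :: "real \<Rightarrow> real"
  assumes cont: "continuous_on {0<..} f" and at0: "(f \<longlongrightarrow> 0) (at_right 0)"
    and at_inf: "(f \<longlongrightarrow> 0) at_top"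
  shows "\<exists>M. \<forall>x>0. \<bar>f x\<bar> \<le> M"
proof -
  have "eventually (\<lambda>x. dist (f x) 0 < 1) (at_right 0)" using tendstoD[OF at0] by simp
  then obtain e where e: "e > 0" "\<And>y. 0 < y \<Longrightarrow> y < e \<Longrightarrow> \<bar>f y\<bar> < 1"
    unfolding eventually_at_right_field by auto
  have "eventually (\<lambda>x. dist (f x) 0 < 1) at_top" using tendstoD[OF at_inf] by simp
  then obtain R where R: "\<And>y. y \<ge> R \<Longrightarrow> \<bar>f y\<bar> < 1"
    unfolding eventually_at_top_linorder by auto
  have "continuous_on {e..max e R} f" using e(1) by (intro continuous_on_subset[OF cont]) auto
  then have "bounded (f ` {e..max e R})"
    by (intro compact_imp_bounded compact_continuous_image compact_Icc)
  then obtain M where M: "\<And>y. y \<in> {e..max e R} \<Longrightarrow> \<bar>f y\<bar> \<le> M"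
    unfolding bounded_real by blast
  have "\<bar>f x\<bar> \<le> max 1 M" if "x > 0" for x
  proof (cases "x < e")
    case True
    then show ?thesis using e(2)[OF that] by simp
  next
    case False
    then show ?thesis using R[of x] M[of x] by (cases "x \<ge> R") force+
  qed
  then show ?thesis by blast
qed

lemma summable_Suc_powr: "\<beta> > 1 \<Longrightarrow> summable (\<lambda>l. real (Suc l) powr (-\<beta>))"
  by (subst summable_Suc_iff) (simp add: summable_real_powr_iff)

lemma sum_samples_powr_bound:
  fixes \<psi> :: "real \<Rightarrow> real"
  assumes \<beta>: "\<beta> > 1" and bd: "\<And>x. x > 0 \<Longrightarrow> \<bar>\<psi> x\<bar> \<le> C * x powr (-\<beta>)"
  shows "\<exists>K. \<forall>h>0. summable (\<lambda>l. \<psi> (real (Suc l) * h)) \<and>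
           \<bar>\<Sum>l. \<psi> (real (Suc l) * h)\<bar> \<le> K * h powr (-\<beta>)"
proof -
  define Z where "Z = (\<Sum>l. real (Suc l) powr (-\<beta>))"
  have sZ: "summable (\<lambda>l. real (Suc l) powr (-\<beta>))" using summable_Suc_powr \<beta> by blast
  show ?thesis
  proof (intro exI[of _ "C * Z"] allI impI conjI)
    fix h :: real assume h: "h > 0"
    have bd': "norm (\<psi> (real (Suc l) * h)) \<le> C * h powr (-\<beta>) * real (Suc l) powr (-\<beta>)" for l
      using bd[of "real (Suc l) * h"] h by (simp add: powr_mult mult_ac)
    have sg: "summable (\<lambda>l. C * h powr (-\<beta>) * real (Suc l) powr (-\<beta>))"
      by (intro summable_mult sZ)
    show "summable (\<lambda>l. \<psi> (real (Suc l) * h))"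
      by (rule summable_comparison_test'[OF sg bd'])
    have "norm (\<Sum>l. \<psi> (real (Suc l) * h)) \<le> (\<Sum>l. C * h powr (-\<beta>) * real (Suc l) powr (-\<beta>))"
      by (rule norm_suminf_le[OF bd' sg])
    also have "\<dots> = C * Z * h powr (-\<beta>)"
      unfolding Z_def suminf_mult[OF sZ] by (simp add: mult_ac)
    finally show "\<bar>\<Sum>l. \<psi> (real (Suc l) * h)\<bar> \<le> C * Z * h powr (-\<beta>)" by simp
  qed
qed

lemma integral_Ioc_combine:
  fixes f :: "real \<Rightarrow> real"
  assumes "0 \<le> a" "a \<le> b" and int: "f integrable_on {0<..b}"
  shows "integral {0<..b} f = integral {0<..a} f + integral {a..b} f"
proof -
  have closed: "integral {0..x} f = integral {0<..x} f" for x :: real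
    by (rule integral_spike_set; rule negligible_subset[of "{0}"]; auto)
  have "f integrable_on {0..b}"
    by (rule integrable_spike_set[OF int]; rule negligible_subset[of "{0}"]; auto)
  then have "integral {0..a} f + integral {a..b} f = integral {0..b} f"
    by (rule Henstock_Kurzweil_Integration.integral_combine[OF assms(1,2)])
  then show ?thesis by (simp add: closed)
qed

lemma absolutely_integrable_on_pos_if_powr_bounds:
  fixes f :: "real \<Rightarrow> real"
  assumes cont: "continuous_on {0<..} f" and e: "e1 > -1" "e2 < -1"
    and near0: "\<And>x. x > 0 \<Longrightarrow> \<bar>f x\<bar> \<le> C1 * x powr e1"
    and at_inf: "\<And>x. x > 0 \<Longrightarrow> \<bar>f x\<bar> \<le> C2 * x powr e2"
  shows "f absolutely_integrable_on {0<..}"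
proof -
  define g where "g x = (if x \<le> 1 then C1 * x powr e1 else C2 * x powr e2)" for x :: real
  have "(\<lambda>x. C1 * x powr e1) integrable_on {0<..1}"
    using integrable_on_powr_from_0'[of e1 1] e by (intro integrable_on_mult_right) auto
  then have int1: "g integrable_on {0<..1}"
    by (rule integrable_spike[where S="{}"]) (auto simp: g_def)
  have "(\<lambda>x. C2 * x powr e2) integrable_on {1..}"
    using has_integral_powr_to_inf[of e2 1] e by (intro integrable_on_mult_right) (auto simp: integrable_on_def)
  then have int2: "g integrable_on {1..}"
    by (rule integrable_spike[where S="{1}"]) (auto simp: g_def)
  have "g integrable_on {0<..1} \<union> {1..}"
    by (rule integrable_Un[OF negligible_subset[of "{1}"] int1 int2]) auto
  moreover have "{0<..1} \<union> {1..} = ({0<..} :: real set)" by auto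
  ultimately have "g integrable_on {0<..}" by simp
  moreover have "norm (f x) \<le> g x" if "x \<in> {0<..}" for x
    using near0 at_inf that by (auto simp: g_def)
  ultimately show ?thesis
    by (intro measurable_bounded_by_integrable_imp_absolutely_integrable[OF
          continuous_imp_measurable_on_sets_lebesgue[OF cont]]) auto
qed

lemma integrable_on_Ioc_if_absolutely_integrable:
  fixes f :: "real \<Rightarrow> real"
  assumes "f absolutely_integrable_on {0<..}"
  shows "f integrable_on {0<..b}"
  by (rule set_lebesgue_integral_eq_integral(1), rule set_integrable_subset[OF assms]) auto

lemma tendsto_integral_Ioc_at_top:
  fixes f :: "real \<Rightarrow> real" and b :: "nat \<Rightarrow> real"
  assumes abs_int: "f absolutely_integrable_on {0<..}" and b: "filterlim b at_top sequentially"
  shows "(\<lambda>N. integral {0<..b N} f) \<longlonglongrightarrow> integral {0<..} f"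
proof -
  define g where "g N t = (if t \<in> {..b N} then f t else 0)" for N t
  have Int: "{..b N} \<inter> {0<..} = {0<..b N}" for N by auto
  have "(\<lambda>N. integral {0<..} (g N)) \<longlonglongrightarrow> integral {0<..} f"
  proof (rule dominated_convergence(2))
    show "g N integrable_on {0<..}" for N
      unfolding g_def integrable_restrict_Int Int
      by (rule integrable_on_Ioc_if_absolutely_integrable[OF abs_int])
    show "(\<lambda>x. norm (f x)) integrable_on {0<..}"
      using abs_int by (simp add: absolutely_integrable_on_def)
    show "norm (g N x) \<le> norm (f x)" for N x by (simp add: g_def)
    show "(\<lambda>N. g N x) \<longlonglongrightarrow> f x" for x
    proof (rule tendsto_eventually)
      have "eventually (\<lambda>N. x \<le> b N) sequentially"
        using b by (simp add: filterlim_at_top)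
      then show "eventually (\<lambda>N. g N x = f x) sequentially"
        by eventually_elim (simp add: g_def)
    qed
  qed
  then show ?thesis unfolding g_def integral_restrict_Int Int .
qed

lemma first_cell_error_powr:
  fixes \<phi> :: "real \<Rightarrow> real"
  assumes h: "h > 0" and e: "e > -1" and int: "\<phi> integrable_on {0<..h}"
    and bd: "\<And>x. x > 0 \<Longrightarrow> \<bar>\<phi> x\<bar> \<le> C * x powr e"
  shows "\<bar>h * \<phi> h - integral {0<..h} \<phi>\<bar> \<le> (C + C / (e + 1)) * h powr (e + 1)"
proof -
  have "\<bar>h * \<phi> h\<bar> \<le> h * (C * h powr e)"
    using bd[OF h] h by (simp add: abs_mult)
  also have "\<dots> = C * h powr (e + 1)"
    using h by (simp add: powr_add)
  finally have endpoint: "\<bar>h * \<phi> h\<bar> \<le> C * h powr (e + 1)" .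
  have "((\<lambda>x. x powr e) has_integral h powr (e + 1) / (e + 1)) {0..h}"
    using has_integral_powr_from_0[OF e] h by simp
  moreover have "((\<lambda>x. x powr e) has_integral h powr (e + 1) / (e + 1)) {0..h} \<longleftrightarrow>
      ((\<lambda>x. x powr e) has_integral h powr (e + 1) / (e + 1)) {0<..h}"
    by (rule has_integral_spike_set_eq; rule negligible_subset[of "{0}"]; auto)
  ultimately have "((\<lambda>x. x powr e) has_integral h powr (e + 1) / (e + 1)) {0<..h}" by simp
  from has_integral_mult_right[OF this, of C]
  have pI: "((\<lambda>x. C * x powr e) has_integral C / (e + 1) * h powr (e + 1)) {0<..h}"
    by simp
  have "norm (integral {0<..h} \<phi>) \<le> integral {0<..h} (\<lambda>x. C * x powr e)"
    by (rule integral_norm_bound_integral[OF int]) (use pI bd in auto)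
  also have "\<dots> = C / (e + 1) * h powr (e + 1)" using pI by blast
  finally have "\<bar>integral {0<..h} \<phi>\<bar> \<le> C / (e + 1) * h powr (e + 1)" by simp
  with endpoint show ?thesis
    using abs_triangle_ineq4[of "h * \<phi> h" "integral {0<..h} \<phi>"] by (simp add: distrib_right)
qed

lemma right_endpoint_rule_error:
  fixes \<phi> \<phi>' :: "real \<Rightarrow> real"
  assumes h: "h \<ge> 0"
    and der: "\<And>x. x \<in> {a..a+h} \<Longrightarrow> (\<phi> has_real_derivative \<phi>' x) (at x)"
    and bd: "\<And>x. x \<in> {a..a+h} \<Longrightarrow> \<bar>\<phi>' x\<bar> \<le> M"
  shows "\<bar>h * \<phi> (a + h) - integral {a..a+h} \<phi>\<bar> \<le> M * h\<^sup>2"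
proof -
  have M: "M \<ge> 0" using bd[of a] h by force
  have "continuous_on {a..a+h} \<phi>"
    by (intro continuous_at_imp_continuous_on ballI) (meson DERIV_isCont der)
  then have "\<phi> integrable_on {a..a+h}" by (rule integrable_continuous_real)
  then have HI: "((\<lambda>x. \<phi> (a + h) - \<phi> x) has_integral h * \<phi> (a + h) - integral {a..a+h} \<phi>) {a..a+h}"
    using has_integral_diff[OF has_integral_const_real[of "\<phi> (a + h)" a "a + h"] integrable_integral] h
    by (simp add: mult.commute)
  have "norm (\<phi> (a + h) - \<phi> x) \<le> M * h" if x: "x \<in> {a..a+h}" for x
  proof (cases "x = a + h")
    case False
    then have "x < a + h" using x by auto
    then obtain z where z: "x < z" "z < a + h" "\<phi> (a + h) - \<phi> x = (a + h - x) * \<phi>' z"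
      using MVT2[of x "a + h" \<phi> \<phi>'] x der by auto
    then have "norm (\<phi> (a + h) - \<phi> x) = (a + h - x) * \<bar>\<phi>' z\<bar>" by (simp add: abs_mult)
    also have "\<dots> \<le> h * M" using z x bd[of z] M by (intro mult_mono) auto
    finally show ?thesis by (simp add: mult.commute)
  qed (use M h in simp)
  then have "norm (h * \<phi> (a + h) - integral {a..a+h} \<phi>) \<le> M * h * Henstock_Kurzweil_Integration.content {a..a+h}"
    using M h by (intro has_integral_bound_real[OF _ _ HI, where S="{}"]) auto
  then show ?thesis using h by (simp add: power2_eq_square mult.assoc)
qed

lemma right_endpoint_rule_error_powr:
  fixes \<phi> \<phi>' :: "real \<Rightarrow> real"
  assumes a: "a > 0" and h: "h \<ge> 0" and \<beta>: "\<beta> \<ge> 0"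
    and der: "\<And>x. x > 0 \<Longrightarrow> (\<phi> has_real_derivative \<phi>' x) (at x)"
    and der_bound: "\<And>x. x > 0 \<Longrightarrow> \<bar>\<phi>' x\<bar> \<le> C * x powr (-\<beta>)"
  shows "\<bar>h * \<phi> (a + h) - integral {a..a+h} \<phi>\<bar> \<le> C * a powr (-\<beta>) * h\<^sup>2"
proof (rule right_endpoint_rule_error)
  fix x assume x: "x \<in> {a..a+h}"
  then show "(\<phi> has_real_derivative \<phi>' x) (at x)" using a by (intro der) auto
  have C: "C \<ge> 0" using der_bound[of 1] by simp
  have "\<bar>\<phi>' x\<bar> \<le> C * x powr (-\<beta>)" using x a by (intro der_bound) auto
  also have "\<dots> \<le> C * a powr (-\<beta>)" using x a C \<beta> by (intro mult_left_mono powr_mono2') auto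
  finally show "\<bar>\<phi>' x\<bar> \<le> C * a powr (-\<beta>)" .
qed (use h in simp)

lemma riemann_partial_sum_error_powr:
  fixes \<phi> \<phi>' :: "real \<Rightarrow> real"
  assumes \<beta>: "1 < \<beta>" "\<beta> < 2" and h: "h > 0"
    and int: "\<And>x. \<phi> integrable_on {0<..x}"
    and der: "\<And>x. x > 0 \<Longrightarrow> (\<phi> has_real_derivative \<phi>' x) (at x)"
    and near0: "\<And>x. x > 0 \<Longrightarrow> \<bar>\<phi> x\<bar> \<le> C1 * x powr (1 - \<beta>)"
    and der_bound: "\<And>x. x > 0 \<Longrightarrow> \<bar>\<phi>' x\<bar> \<le> C3 * x powr (-\<beta>)"
  shows "\<bar>h * (\<Sum>l<Suc N. \<phi> (real (Suc l) * h)) - integral {0<..real (Suc N) * h} \<phi>\<bar>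
           \<le> (C1 + C1 / (2 - \<beta>)) * h powr (2 - \<beta>) + C3 * h powr (2 - \<beta>) * (\<Sum>l<N. real (Suc l) powr (-\<beta>))"
proof (induction N)
  case 0
  then show ?case using first_cell_error_powr[OF h _ int near0] \<beta> by simp
next
  case (Suc n)
  define a where "a = real (Suc n) * h"
  have a: "a > 0" "real (Suc (Suc n)) * h = a + h"
    using h by (simp add: a_def, simp add: a_def algebra_simps)
  have "\<bar>h * \<phi> (a + h) - integral {a..a+h} \<phi>\<bar> \<le> C3 * a powr (-\<beta>) * h\<^sup>2"
    by (rule right_endpoint_rule_error_powr[OF _ _ _ der der_bound]) (use a h \<beta> in auto)
  also have "C3 * a powr (-\<beta>) * h\<^sup>2 = C3 * h powr (2 - \<beta>) * real (Suc n) powr (-\<beta>)"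
  proof -
    have "a powr (-\<beta>) = real (Suc n) powr (-\<beta>) * h powr (-\<beta>)"
      using h by (simp add: a_def powr_mult)
    moreover have "h powr (2 - \<beta>) = h\<^sup>2 * h powr (-\<beta>)"
      using h powr_add[of h 2 "-\<beta>"] by (simp add: powr_numeral)
    ultimately show ?thesis by (simp add: mult_ac)
  qed
  finally have cell: "\<bar>h * \<phi> (a + h) - integral {a..a+h} \<phi>\<bar> \<le> C3 * h powr (2 - \<beta>) * real (Suc n) powr (-\<beta>)" .
  have split: "h * (\<Sum>l<Suc (Suc n). \<phi> (real (Suc l) * h)) - integral {0<..real (Suc (Suc n)) * h} \<phi>
      = (h * (\<Sum>l<Suc n. \<phi> (real (Suc l) * h)) - integral {0<..real (Suc n) * h} \<phi>)
        + (h * \<phi> (a + h) - integral {a..a+h} \<phi>)" (is "_ = ?X + ?Y")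
    unfolding a(2) using integral_Ioc_combine[of a "a + h", OF _ _ int] a h
    by (simp add: a_def algebra_simps)
  have "C3 * h powr (2 - \<beta>) * (\<Sum>l<Suc n. real (Suc l) powr (-\<beta>))
      = C3 * h powr (2 - \<beta>) * (\<Sum>l<n. real (Suc l) powr (-\<beta>)) + C3 * h powr (2 - \<beta>) * real (Suc n) powr (-\<beta>)"
    by (simp add: distrib_left)
  then show ?case unfolding split using Suc.IH cell abs_triangle_ineq[of ?X ?Y] by linarith
qed

lemma riemann_sum_error_powr:
  fixes \<phi> \<phi>' :: "real \<Rightarrow> real"
  assumes \<beta>: "1 < \<beta>" "\<beta> < 2"
    and der: "\<And>x. x > 0 \<Longrightarrow> (\<phi> has_real_derivative \<phi>' x) (at x)"
    and near0: "\<And>x. x > 0 \<Longrightarrow> \<bar>\<phi> x\<bar> \<le> C1 * x powr (1 - \<beta>)"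
    and decay: "\<And>x. x > 0 \<Longrightarrow> \<bar>\<phi> x\<bar> \<le> C2 * x powr (-2)"
    and der_bound: "\<And>x. x > 0 \<Longrightarrow> \<bar>\<phi>' x\<bar> \<le> C3 * x powr (-\<beta>)"
  shows "\<exists>K. \<forall>h>0. \<bar>h * (\<Sum>l. \<phi> (real (Suc l) * h)) - integral {0<..} \<phi>\<bar> \<le> K * h powr (2 - \<beta>)"
proof -
  have C3: "C3 \<ge> 0" using der_bound[of 1] by simp
  have abs_int: "\<phi> absolutely_integrable_on {0<..}"
    using \<beta> by (intro absolutely_integrable_on_pos_if_powr_bounds[OF _ _ _ near0 decay]
        continuous_at_imp_continuous_on ballI) (auto intro: DERIV_isCont der)
  note int = integrable_on_Ioc_if_absolutely_integrable[OF abs_int]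
  have sZ: "summable (\<lambda>l. real (Suc l) powr (-\<beta>))" using summable_Suc_powr \<beta> by blast
  define K where "K = C1 + C1 / (2 - \<beta>) + C3 * (\<Sum>l. real (Suc l) powr (-\<beta>))"
  have "\<bar>h * (\<Sum>l. \<phi> (real (Suc l) * h)) - integral {0<..} \<phi>\<bar> \<le> K * h powr (2 - \<beta>)" if h: "h > 0" for h
  proof -
    have "summable (\<lambda>l. \<phi> (real (Suc l) * h))"
      using sum_samples_powr_bound[of 2 \<phi> C2] decay h by auto
    moreover have "filterlim (\<lambda>N. real (Suc N) * h) at_top sequentially"
      using h by real_asymp
    ultimately have lim: "(\<lambda>N. h * (\<Sum>l<Suc N. \<phi> (real (Suc l) * h)) - integral {0<..real (Suc N) * h} \<phi>)
        \<longlonglongrightarrow> h * (\<Sum>l. \<phi> (real (Suc l) * h)) - integral {0<..} \<phi>"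
      by (intro tendsto_intros LIMSEQ_Suc[OF summable_LIMSEQ] tendsto_integral_Ioc_at_top abs_int)
    have "\<bar>h * (\<Sum>l<Suc N. \<phi> (real (Suc l) * h)) - integral {0<..real (Suc N) * h} \<phi>\<bar>
        \<le> K * h powr (2 - \<beta>)" for N
    proof -
      have "\<bar>h * (\<Sum>l<Suc N. \<phi> (real (Suc l) * h)) - integral {0<..real (Suc N) * h} \<phi>\<bar>
          \<le> (C1 + C1 / (2 - \<beta>)) * h powr (2 - \<beta>) + C3 * h powr (2 - \<beta>) * (\<Sum>l<N. real (Suc l) powr (-\<beta>))"
        by (rule riemann_partial_sum_error_powr[OF \<beta> h int der near0 der_bound])
      also have "\<dots> \<le> K * h powr (2 - \<beta>)"
        using sum_le_suminf[OF sZ, of "{..<N}"] C3 by (simp add: K_def algebra_simps mult_left_mono)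
      finally show ?thesis .
    qed
    then show ?thesis by (intro LIMSEQ_le_const2[OF tendsto_rabs[OF lim]]) blast
  qed
  then show ?thesis by blast
qed

section \<open>Limits, Dirichlet series and a Gaussian integral\<close>

lemma tendsto_0_if_geometric_bound:
  fixes X :: "nat \<Rightarrow> real"
  assumes q: "0 \<le> q" "q < 1" and bd: "\<And>j. \<bar>X j\<bar> \<le> K * q ^ j"
  shows "X \<longlonglongrightarrow> 0" and "(\<lambda>j. real j * X j) \<longlonglongrightarrow> 0"
proof -
  have lim0: "(\<lambda>j. K * q ^ j) \<longlonglongrightarrow> 0"
    using q by (intro tendsto_mult_right_zero LIMSEQ_power_zero) auto
  have "\<forall>j. norm (X j) \<le> K * q ^ j" using bd by simp
  then show "X \<longlonglongrightarrow> 0" by (rule Lim_null_comparison[OF always_eventually lim0])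
  have lim: "(\<lambda>j. K * (real j * q ^ j)) \<longlonglongrightarrow> 0"
    using q by (intro tendsto_mult_right_zero powser_times_n_limit_0) auto
  have norm_bound: "norm (real j * X j) \<le> K * (real j * q ^ j)" for j
  proof -
    have "norm (real j * X j) = real j * \<bar>X j\<bar>" by (simp add: abs_mult)
    also have "\<dots> \<le> real j * (K * q ^ j)" using bd[of j] by (intro mult_left_mono) auto
    finally show ?thesis by (simp only: mult.left_commute)
  qed
  show "(\<lambda>j. real j * X j) \<longlonglongrightarrow> 0"
    by (rule Lim_null_comparison[OF always_eventually lim]) (use norm_bound in blast)
qed

lemma weighted_quotient_error_tendsto_0:
  fixes w x y :: "nat \<Rightarrow> real"
  assumes x: "(\<lambda>j. w j * (x j - a)) \<longlonglongrightarrow> 0" and y: "(\<lambda>j. w j * (y j - b)) \<longlonglongrightarrow> 0"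
    and lim: "y \<longlonglongrightarrow> b" and b: "b \<noteq> 0"
  shows "(\<lambda>j. w j * (x j / y j - a / b)) \<longlonglongrightarrow> 0"
proof (rule Lim_transform_eventually)
  have "(\<lambda>j. (w j * (x j - a) * b - a * (w j * (y j - b))) / (y j * b)) \<longlonglongrightarrow> (0 * b - a * 0) / (b * b)"
    using b by (intro tendsto_intros x y lim) auto
  then show "(\<lambda>j. (w j * (x j - a) * b - a * (w j * (y j - b))) / (y j * b)) \<longlonglongrightarrow> 0"
    by simp
  show "eventually (\<lambda>j. (w j * (x j - a) * b - a * (w j * (y j - b))) / (y j * b)
      = w j * (x j / y j - a / b)) sequentially"
    using tendsto_imp_eventually_ne[OF lim b]
    by eventually_elim (use b in \<open>simp add: field_simps\<close>)
qed

lemma abs_powr_mult_ln_power_le: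
  fixes c :: real assumes "c \<ge> 0"
  shows "\<bar>c * real (Suc l) powr (-y) * (- ln (real (Suc l))) ^ m\<bar> \<le> c * real (Suc l) powr (real m - y)"
proof -
  define n where "n = real (Suc l)"
  have n: "n \<ge> 1" unfolding n_def by simp
  have "ln n < n" by (rule ln_less_self) (use n in linarith)
  then have "ln n ^ m \<le> n ^ m" by (simp add: power_mono n)
  also have "\<dots> = n powr real m" using n by (simp add: powr_realpow)
  finally have "\<bar>c * n powr (-y) * (- ln n) ^ m\<bar> \<le> c * n powr (-y) * n powr real m"
    using assms n by (simp add: abs_mult power_abs mult_left_mono)
  also have "\<dots> = c * n powr (real m - y)" using n by (simp add: powr_add[symmetric])
  finally show ?thesis unfolding n_def .
qed

lemma has_real_derivative_dirichlet_log_series: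
  fixes c :: "nat \<Rightarrow> real"
  assumes c0: "\<And>l. c l \<ge> 0" and summ: "\<And>r. summable (\<lambda>l. c l * real (Suc l) powr r)"
  shows "((\<lambda>y. \<Sum>l. c l * real (Suc l) powr (-y) * (- ln (real (Suc l))) ^ k) has_real_derivative
          (\<Sum>l. c l * real (Suc l) powr (-x) * (- ln (real (Suc l))) ^ Suc k)) (at x)"
proof (rule has_field_derivative_series'(2))
  show "convex {x-1<..<x+1}" "x \<in> {x-1<..<x+1}" "x \<in> interior {x-1<..<x+1}" by simp_all
  show "((\<lambda>y. c n * real (Suc n) powr (-y) * (- ln (real (Suc n))) ^ k) has_real_derivative
         c n * real (Suc n) powr (-y) * (- ln (real (Suc n))) ^ Suc k) (at y within {x-1<..<x+1})" for n y
    by (rule has_field_derivative_at_within) (auto intro!: derivative_eq_intros simp: algebra_simps)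
  show "summable (\<lambda>n. c n * real (Suc n) powr (-x) * (- ln (real (Suc n))) ^ k)"
    by (rule summable_comparison_test'[OF summ[of "real k - x"]])
       (use abs_powr_mult_ln_power_le c0 in auto)
  show "uniformly_convergent_on {x-1<..<x+1}
          (\<lambda>N y. \<Sum>n<N. c n * real (Suc n) powr (-y) * (- ln (real (Suc n))) ^ Suc k)"
  proof (rule Weierstrass_m_test'[OF _ summ[of "real k + 2 - x"]])
    fix n y assume y: "y \<in> {x-1<..<x+1}"
    have "norm (c n * real (Suc n) powr (-y) * (- ln (real (Suc n))) ^ Suc k)
        \<le> c n * real (Suc n) powr (real (Suc k) - y)"
      using abs_powr_mult_ln_power_le[OF c0] by (simp only: real_norm_def)
    also have "\<dots> \<le> c n * real (Suc n) powr (real k + 2 - x)"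
      using y c0[of n] by (intro mult_left_mono powr_mono) auto
    finally show "norm (c n * real (Suc n) powr (-y) * (- ln (real (Suc n))) ^ Suc k)
        \<le> c n * real (Suc n) powr (real k + 2 - x)" .
  qed
qed

lemma integral_substitute_2_square:
  fixes f :: "real \<Rightarrow> real"
  assumes fI: "(f has_integral I) {0<..}" and fA: "f absolutely_integrable_on {0<..}"
  shows "integral {0<..} (\<lambda>x. 4 * x * f (2 * x\<^sup>2)) = I"
proof -
  define g where "g t = 2 * t\<^sup>2" for t :: real
  have der: "(g has_real_derivative 4 * t) (at t within {0<..})" for t
    unfolding g_def by (auto intro!: derivative_eq_intros)
  have inj: "inj_on g {0<..}"
    unfolding g_def inj_on_def by (auto simp: power2_eq_iff_nonneg)
  have img: "g ` {0<..} = {0<..}"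
  proof
    show "{0<..} \<subseteq> g ` {0<..}"
    proof
      fix u :: real assume "u \<in> {0<..}"
      then have "u = g (sqrt (u / 2))" "sqrt (u / 2) \<in> {0<..}" by (simp_all add: g_def)
      then show "u \<in> g ` {0<..}" by blast
    qed
  qed (auto simp: g_def)
  have "integral {0<..} (\<lambda>x. \<bar>4 * x\<bar> * f (g x)) = I"
    using has_absolute_integral_change_of_variables_1'[of "{0<..}" g "\<lambda>t. 4 * t" f I, OF _ der inj]
      fA fI img by auto
  moreover have "integral {0<..} (\<lambda>x. \<bar>4 * x\<bar> * f (g x)) = integral {0<..} (\<lambda>x. 4 * x * f (2 * x\<^sup>2))"
    by (intro integral_cong) (simp add: g_def)
  ultimately show ?thesis by simp
qed

lemma integral_powr_gauss:
  fixes a :: real assumes a: "a > -1"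
  shows "integral {0<..} (\<lambda>t. t powr a * exp (- 2 * t ^ 2)) = 2 powr (- (a + 3) / 2) * Gamma ((a + 1) / 2)"
proof -
  define z where "z = (a + 1) / 2"
  define c where "c = 2 powr (- (a + 3) / 2)"
  define f where "f u = c * (u powr (z - 1) / exp u)" for u :: real
  have "((\<lambda>t. t powr (z - 1) / exp t) has_integral Gamma z) {0..}"
    using a by (intro Gamma_integral_real) (simp add: z_def)
  moreover have "((\<lambda>t. t powr (z - 1) / exp t) has_integral Gamma z) {0..} \<longleftrightarrow>
                 ((\<lambda>t. t powr (z - 1) / exp t) has_integral Gamma z) {0<..}"
    by (rule has_integral_spike_set_eq; rule negligible_subset[of "{0}"]; auto)
  ultimately have fI: "(f has_integral c * Gamma z) {0<..}"
    unfolding f_def by (intro has_integral_mult_right) simp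
  have fA: "f absolutely_integrable_on {0<..}"
    by (rule nonnegative_absolutely_integrable_1) (use fI in \<open>auto simp: f_def c_def\<close>)
  have "4 * x * f (2 * x\<^sup>2) = x powr a * exp (- 2 * x ^ 2)" if "x \<in> {0<..}" for x
  proof -
    have x0: "x > 0" using that by simp
    have "(2 * x ^ 2) powr (z - 1) = 2 powr (z - 1) * (x powr 2) powr (z - 1)"
      using x0 by (simp add: powr_mult powr_numeral)
    also have "(x powr 2) powr (z - 1) = x powr (a - 1)"
    proof -
      have "2 * (z - 1) = a - 1" by (simp add: z_def field_simps)
      then show ?thesis by (simp add: powr_powr)
    qed
    finally have p: "(2 * x ^ 2) powr (z - 1) = 2 powr (z - 1) * x powr (a - 1)" .
    have "c * 2 powr (z - 1) = 2 powr (- (a + 3) / 2 + (z - 1))" by (simp add: c_def powr_add)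
    also have "- (a + 3) / 2 + (z - 1) = -2" by (simp add: z_def field_simps)
    finally have c4: "4 * c * 2 powr (z - 1) = 1" by (simp add: powr_minus powr_numeral)
    have xa: "x * x powr (a - 1) = x powr a" using x0 by (simp add: powr_diff)
    have "4 * x * f (2 * x\<^sup>2) = (4 * c * 2 powr (z - 1)) * (x * x powr (a - 1)) / exp (2 * x ^ 2)"
      unfolding f_def p by simp
    also have "\<dots> = x powr a * exp (- 2 * x ^ 2)"
      unfolding c4 xa by (simp add: exp_minus divide_inverse)
    finally show ?thesis .
  qed
  then have "integral {0<..} (\<lambda>t. t powr a * exp (- 2 * t ^ 2)) = integral {0<..} (\<lambda>x. 4 * x * f (2 * x\<^sup>2))"
    by (intro integral_cong) simp
  also have "\<dots> = c * Gamma z" by (rule integral_substitute_2_square[OF fI fA])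
  finally show ?thesis by (simp add: c_def z_def)
qed

section \<open>The integrands \<open>t^a e^(-2t^2) (ln t)^s\<close>\<close>

definition gauss_log :: "real \<Rightarrow> nat \<Rightarrow> real \<Rightarrow> real" where
  "gauss_log a s x = x powr a * exp (- 2 * x ^ 2) * ln x ^ s"

text \<open>For \<open>s = 0\<close> and \<open>h = B^-j\<close> this is \<open>c_B B^(\<alpha> j) K_j^M(\<alpha>)\<close>; the factors
  \<open>(ln t)^s\<close> come from differentiating in \<open>\<alpha>\<close>.\<close>

definition gauss_log_riemann :: "real \<Rightarrow> nat \<Rightarrow> real \<Rightarrow> real" where
  "gauss_log_riemann a s h = 2 * h * (\<Sum>l. gauss_log a s (real (Suc l) * h))
     + h\<^sup>2 * (\<Sum>l. gauss_log (a - 1) s (real (Suc l) * h))"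

lemma Ips_eq_integral_gauss_log:
  "Ips p cB s \<alpha> = 2 / cB * integral {0<..} (gauss_log (4 * p + 1 - \<alpha>) s)"
  by (simp add: Ips_def gauss_log_def[abs_def])

lemma gauss_log_powr_bound:
  assumes "d < a"
  shows "\<exists>M. \<forall>x>0. \<bar>gauss_log a s x\<bar> \<le> M * x powr d"
proof -
  have "\<exists>M. \<forall>x>0. \<bar>gauss_log (a - d) s x\<bar> \<le> M"
    unfolding gauss_log_def
    by (rule bounded_on_pos_if_tendsto_0, (intro continuous_intros; auto)) (use assms in real_asymp)+
  then obtain M where M: "\<And>x. x > 0 \<Longrightarrow> \<bar>gauss_log (a - d) s x\<bar> \<le> M" by blast
  have "\<bar>gauss_log a s x\<bar> \<le> M * x powr d" if x: "x > 0" for x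
  proof -
    have "\<bar>gauss_log a s x\<bar> = \<bar>gauss_log (a - d) s x\<bar> * x powr d"
      using x by (simp add: gauss_log_def abs_mult powr_diff)
    also have "\<dots> \<le> M * x powr d" using M[OF x] by (simp add: mult_right_mono)
    finally show ?thesis .
  qed
  then show ?thesis by blast
qed

lemma summable_gauss_log_samples:
  assumes "h > 0"
  shows "summable (\<lambda>l. gauss_log a s (real (Suc l) * h))"
proof -
  have "- max 2 (1 - a) < a" by (simp add: max_def)
  then obtain M where M: "\<And>x. x > 0 \<Longrightarrow> \<bar>gauss_log a s x\<bar> \<le> M * x powr (- max 2 (1 - a))"
    using gauss_log_powr_bound by blast
  have "max 2 (1 - a) > 1" by simp
  then show ?thesis using sum_samples_powr_bound[OF _ M] assms by blast
qed

lemma gauss_log_has_real_derivative: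
  assumes x: "x > 0"
  shows "(gauss_log a s has_real_derivative
           a * gauss_log (a - 1) s x - 4 * gauss_log (a + 1) s x + real s * gauss_log (a - 1) (s - 1) x) (at x)"
proof -
  have "(gauss_log a s has_real_derivative
      (a * x powr (a - 1) * exp (- 2 * x ^ 2) + exp (- 2 * x ^ 2) * (- 4 * x) * x powr a) * ln x ^ s
      + real s * ln x ^ (s - 1) * (1 / x) * (x powr a * exp (- 2 * x ^ 2))) (at x)"
    unfolding gauss_log_def[abs_def]
    by (intro DERIV_mult has_real_derivative_powr x) (use x in \<open>auto intro!: derivative_eq_intros\<close>)
  then show ?thesis
    by (rule DERIV_cong) (use x in \<open>simp add: gauss_log_def powr_add powr_diff field_simps\<close>)
qed

lemma gauss_log_deriv_powr_bound:
  assumes "d < a - 1"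
  shows "\<exists>M. \<forall>x>0. \<bar>a * gauss_log (a - 1) s x - 4 * gauss_log (a + 1) s x
                       + real s * gauss_log (a - 1) (s - 1) x\<bar> \<le> M * x powr d"
proof -
  obtain M1 where M1: "\<And>x. x > 0 \<Longrightarrow> \<bar>gauss_log (a - 1) s x\<bar> \<le> M1 * x powr d"
    using gauss_log_powr_bound[of d "a - 1" s] assms by auto
  obtain M2 where M2: "\<And>x. x > 0 \<Longrightarrow> \<bar>gauss_log (a + 1) s x\<bar> \<le> M2 * x powr d"
    using gauss_log_powr_bound[of d "a + 1" s] assms by auto
  obtain M3 where M3: "\<And>x. x > 0 \<Longrightarrow> \<bar>gauss_log (a - 1) (s - 1) x\<bar> \<le> M3 * x powr d"
    using gauss_log_powr_bound[of d "a - 1" "s - 1"] assms by auto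
  have triangle: "\<bar>u - v + w\<bar> \<le> \<bar>u\<bar> + \<bar>v\<bar> + \<bar>w\<bar>" for u v w :: real
    by arith
  have "\<bar>a * gauss_log (a - 1) s x - 4 * gauss_log (a + 1) s x + real s * gauss_log (a - 1) (s - 1) x\<bar>
      \<le> (\<bar>a\<bar> * M1 + 4 * M2 + real s * M3) * x powr d" if x: "x > 0" for x
  proof -
    have "\<bar>a * gauss_log (a - 1) s x - 4 * gauss_log (a + 1) s x + real s * gauss_log (a - 1) (s - 1) x\<bar>
        \<le> \<bar>a\<bar> * \<bar>gauss_log (a - 1) s x\<bar> + 4 * \<bar>gauss_log (a + 1) s x\<bar> + real s * \<bar>gauss_log (a - 1) (s - 1) x\<bar>"
      using triangle[of "a * gauss_log (a - 1) s x" "4 * gauss_log (a + 1) s x"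
          "real s * gauss_log (a - 1) (s - 1) x"] by (simp add: abs_mult)
    also have "\<dots> \<le> \<bar>a\<bar> * (M1 * x powr d) + 4 * (M2 * x powr d) + real s * (M3 * x powr d)"
      by (intro add_mono mult_left_mono M1 M2 M3 x) auto
    finally show ?thesis by (simp add: algebra_simps)
  qed
  then show ?thesis by blast
qed

lemma gauss_log_riemann_error:
  assumes a: "a > -1"
  shows "\<exists>\<delta>>0. \<exists>K. \<forall>h>0.
           \<bar>gauss_log_riemann a s h - 2 * integral {0<..} (gauss_log a s)\<bar> \<le> K * h powr \<delta>"
proof -
  define \<beta> where "\<beta> = (max 1 (1 - a) + 2) / 2"
  have \<beta>: "1 < \<beta>" "\<beta> < 2" "1 - \<beta> < a"
    using a unfolding \<beta>_def max_def by (auto split: if_splits simp: field_simps)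
  obtain M1 where M1: "\<And>x. x > 0 \<Longrightarrow> \<bar>gauss_log a s x\<bar> \<le> M1 * x powr (1 - \<beta>)"
    using gauss_log_powr_bound[of "1 - \<beta>" a s] \<beta> by auto
  obtain M2 where M2: "\<And>x. x > 0 \<Longrightarrow> \<bar>gauss_log a s x\<bar> \<le> M2 * x powr (-2)"
    using gauss_log_powr_bound[of "-2" a s] a by auto
  obtain M3 where M3: "\<And>x. x > 0 \<Longrightarrow> \<bar>gauss_log (a - 1) s x\<bar> \<le> M3 * x powr (-\<beta>)"
    using gauss_log_powr_bound[of "-\<beta>" "a - 1" s] \<beta> by auto
  obtain M' where der_bound: "\<And>x. x > 0 \<Longrightarrow>
      \<bar>a * gauss_log (a - 1) s x - 4 * gauss_log (a + 1) s x + real s * gauss_log (a - 1) (s - 1) x\<bar>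
        \<le> M' * x powr (-\<beta>)"
    using gauss_log_deriv_powr_bound[of "-\<beta>" a s] \<beta> by auto
  obtain K1 where K1: "\<And>h. h > 0 \<Longrightarrow>
      \<bar>h * (\<Sum>l. gauss_log a s (real (Suc l) * h)) - integral {0<..} (gauss_log a s)\<bar> \<le> K1 * h powr (2 - \<beta>)"
    using riemann_sum_error_powr[OF \<beta>(1,2) gauss_log_has_real_derivative M1 M2 der_bound] by blast
  obtain K2 where K2: "\<And>h. h > 0 \<Longrightarrow> \<bar>\<Sum>l. gauss_log (a - 1) s (real (Suc l) * h)\<bar> \<le> K2 * h powr (-\<beta>)"
    using sum_samples_powr_bound[OF \<beta>(1) M3] by blast
  have "\<bar>gauss_log_riemann a s h - 2 * integral {0<..} (gauss_log a s)\<bar> \<le> (2 * K1 + K2) * h powr (2 - \<beta>)"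
    if h: "h > 0" for h
  proof -
    define S1 where "S1 = h * (\<Sum>l. gauss_log a s (real (Suc l) * h))"
    define S2 where "S2 = (\<Sum>l. gauss_log (a - 1) s (real (Suc l) * h))"
    define I where "I = integral {0<..} (gauss_log a s)"
    have "\<bar>h\<^sup>2 * S2\<bar> \<le> h\<^sup>2 * (K2 * h powr (-\<beta>))"
      using K2[OF h] by (simp add: S2_def abs_mult mult_left_mono)
    also have "\<dots> = K2 * h powr (2 - \<beta>)"
      using h powr_add[of h 2 "-\<beta>"] by (simp add: powr_numeral)
    finally have "\<bar>h\<^sup>2 * S2\<bar> \<le> K2 * h powr (2 - \<beta>)" .
    moreover have "\<bar>S1 - I\<bar> \<le> K1 * h powr (2 - \<beta>)" using K1[OF h] by (simp add: S1_def I_def)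
    ultimately have "\<bar>2 * (S1 - I) + h\<^sup>2 * S2\<bar> \<le> 2 * (K1 * h powr (2 - \<beta>)) + K2 * h powr (2 - \<beta>)"
      using abs_triangle_ineq[of "2 * (S1 - I)" "h\<^sup>2 * S2"] by simp
    then show ?thesis by (simp add: gauss_log_riemann_def S1_def S2_def I_def algebra_simps)
  qed
  moreover have "2 - \<beta> > 0" using \<beta> by simp
  ultimately show ?thesis by blast
qed

lemma gauss_log_riemann_tendsto:
  assumes B: "B > 1" and a: "a > -1"
  shows "(\<lambda>j. gauss_log_riemann a s (1 / B ^ j) - 2 * integral {0<..} (gauss_log a s)) \<longlonglongrightarrow> 0"
    and "(\<lambda>j. real j * (gauss_log_riemann a s (1 / B ^ j) - 2 * integral {0<..} (gauss_log a s))) \<longlonglongrightarrow> 0"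
proof -
  obtain \<delta> K where \<delta>: "\<delta> > 0"
    and bd: "\<And>h. h > 0 \<Longrightarrow> \<bar>gauss_log_riemann a s h - 2 * integral {0<..} (gauss_log a s)\<bar> \<le> K * h powr \<delta>"
    using gauss_log_riemann_error[OF a, of s] by blast
  have "(1 / B ^ j) powr \<delta> = (B powr (-\<delta>)) ^ j" for j
    using B by (simp add: powr_divide powr_realpow[symmetric] powr_powr powr_minus_divide mult.commute)
  then have geometric:
    "\<bar>gauss_log_riemann a s (1 / B ^ j) - 2 * integral {0<..} (gauss_log a s)\<bar> \<le> K * (B powr (-\<delta>)) ^ j" for j
    using bd[of "1 / B ^ j"] B by simp
  have q: "0 \<le> B powr (-\<delta>)" "B powr (-\<delta>) < 1"
    using B \<delta> by (simp_all add: powr_less_one)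
  show "(\<lambda>j. gauss_log_riemann a s (1 / B ^ j) - 2 * integral {0<..} (gauss_log a s)) \<longlonglongrightarrow> 0"
    by (rule tendsto_0_if_geometric_bound(1)[OF q geometric])
  show "(\<lambda>j. real j * (gauss_log_riemann a s (1 / B ^ j) - 2 * integral {0<..} (gauss_log a s))) \<longlonglongrightarrow> 0"
    by (rule tendsto_0_if_geometric_bound(2)[OF q geometric])
qed

lemma gauss_log_riemann_0_pos:
  assumes "h > 0"
  shows "gauss_log_riemann a 0 h > 0"
proof -
  have "(\<Sum>l. gauss_log b 0 (real (Suc l) * h)) > 0" for b
    using assms by (intro suminf_pos summable_gauss_log_samples) (auto simp: gauss_log_def)
  then show ?thesis
    using assms unfolding gauss_log_riemann_def by (intro add_pos_pos mult_pos_pos) auto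
qed

lemma Ips_0_eq_Gamma:
  assumes "4 * p + 2 - \<alpha> > 0"
  shows "Ips p cB 0 \<alpha> = 2 powr (- (2 * p - \<alpha> / 2 + 1)) / cB * Gamma (2 * p + 1 - \<alpha> / 2)"
proof -
  define a where "a = 4 * p + 1 - \<alpha>"
  have "Ips p cB 0 \<alpha> = 2 * 2 powr (- (a + 3) / 2) / cB * Gamma ((a + 1) / 2)"
    using integral_powr_gauss[of a] assms by (simp add: Ips_def a_def)
  moreover have "- (2 * p - \<alpha> / 2 + 1) = 1 + - (a + 3) / 2" "(a + 1) / 2 = 2 * p + 1 - \<alpha> / 2"
    by (simp_all add: a_def field_simps)
  ultimately show ?thesis by (simp add: powr_add)
qed

section \<open>The series \<open>K_j^M\<close> and its derivatives\<close>

lemma fp_squared: "x > 0 \<Longrightarrow> (fp p x)\<^sup>2 = x powr (4 * p) * exp (- 2 * x\<^sup>2)"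
proof -
  assume x: "x > 0"
  have "(x powr (2 * p))\<^sup>2 = x powr (4 * p)" using x by (simp add: powr_realpow[symmetric] powr_powr)
  moreover have "(exp (- (x\<^sup>2)))\<^sup>2 = exp (- 2 * x\<^sup>2)"
    by (simp add: power2_eq_square[of "exp _"] exp_add[symmetric])
  ultimately show ?thesis unfolding fp_def by (simp add: power_mult_distrib)
qed

lemma summable_fp_squared_powr:
  assumes h: "h > 0"
  shows "summable (\<lambda>l. (fp p (real (Suc l) * h))\<^sup>2 * (2 * real (Suc l) + 1) * real (Suc l) powr r)"
proof -
  define e where "e = 1 + \<bar>r\<bar>"
  have "norm ((fp p (real (Suc l) * h))\<^sup>2 * (2 * real (Suc l) + 1) * real (Suc l) powr r)
      \<le> 3 * h powr (-e) * gauss_log (4 * p + e) 0 (real (Suc l) * h)" for l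
  proof -
    define n where "n = real (Suc l)"
    define y where "y = n * h"
    have n: "n \<ge> 1" by (simp add: n_def)
    have y: "y > 0" using n h by (simp add: y_def)
    have "(fp p y)\<^sup>2 * (2 * n + 1) * n powr r \<le> (fp p y)\<^sup>2 * (3 * n) * n powr \<bar>r\<bar>"
      using n by (intro mult_mono powr_mono) auto
    also have "\<dots> = 3 * (y powr (4 * p) * exp (- 2 * y\<^sup>2) * n powr e)"
      using n y by (simp add: fp_squared e_def powr_add)
    also have "n powr e = y powr e * h powr (-e)"
      using n h by (simp add: y_def powr_mult powr_minus)
    also have "3 * (y powr (4 * p) * exp (- 2 * y\<^sup>2) * (y powr e * h powr (-e)))
        = 3 * h powr (-e) * gauss_log (4 * p + e) 0 y"
      using y by (simp add: gauss_log_def powr_add)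
    finally show ?thesis using n unfolding n_def y_def by simp
  qed
  then show ?thesis
    by (rule summable_comparison_test'[OF summable_mult[OF summable_gauss_log_samples[OF h]]])
qed

lemma KM_summand_eq:
  assumes h: "h > 0" and n: "n > 0"
  shows "h\<^sup>2 / cB * ((fp p (n * h))\<^sup>2 * (2 * n + 1) * n powr (-\<alpha>) * ln (n * h) ^ s)
       = h powr \<alpha> / cB * (2 * h * gauss_log (4 * p + 1 - \<alpha>) s (n * h)
                           + h\<^sup>2 * gauss_log (4 * p + 1 - \<alpha> - 1) s (n * h))"
proof -
  define y where "y = n * h"
  have y: "y > 0" using h n by (simp add: y_def)
  have "y powr (4 * p + 1 - \<alpha>) = y powr (4 * p + (-\<alpha>) + 1)" by (simp add: algebra_simps)
  also have "\<dots> = y powr (4 * p) * y powr (-\<alpha>) * y" using y by (simp only: powr_add powr_one')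
  finally have a: "y powr (4 * p + 1 - \<alpha>) = y powr (4 * p) * y powr (-\<alpha>) * y" using y by simp
  have a1: "y powr (4 * p + 1 - \<alpha> - 1) = y powr (4 * p) * y powr (-\<alpha>)"
    by (simp add: powr_add[symmetric])
  have hy: "h powr \<alpha> * y powr (-\<alpha>) = n powr (-\<alpha>)"
    using h n by (simp add: y_def powr_mult powr_minus)
  have "h powr \<alpha> / cB * (2 * h * gauss_log (4 * p + 1 - \<alpha>) s y + h\<^sup>2 * gauss_log (4 * p + 1 - \<alpha> - 1) s y)
      = (h powr \<alpha> * y powr (-\<alpha>)) / cB * (y powr (4 * p) * exp (- 2 * y\<^sup>2) * ln y ^ s) * (2 * h * y + h\<^sup>2)"
    unfolding gauss_log_def a a1 by (simp add: algebra_simps add_divide_distrib)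
  also have "2 * h * y + h\<^sup>2 = h\<^sup>2 * (2 * n + 1)"
    by (simp add: y_def power2_eq_square algebra_simps)
  finally show ?thesis
    unfolding hy y_def[symmetric] by (subst eq_commute) (simp add: fp_squared[OF y] mult_ac)
qed

lemma KM_summands_sums:
  assumes h: "h > 0"
  shows "(\<lambda>l. h\<^sup>2 / cB * ((fp p (real (Suc l) * h))\<^sup>2 * (2 * real (Suc l) + 1)
            * real (Suc l) powr (-\<alpha>) * ln (real (Suc l) * h) ^ s))
         sums (h powr \<alpha> / cB * gauss_log_riemann (4 * p + 1 - \<alpha>) s h)" (is "?f sums _")
proof -
  have "?f = (\<lambda>l. h powr \<alpha> / cB * (2 * h * gauss_log (4 * p + 1 - \<alpha>) s (real (Suc l) * h)
                           + h\<^sup>2 * gauss_log (4 * p + 1 - \<alpha> - 1) s (real (Suc l) * h)))"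
    by (intro ext KM_summand_eq h) simp
  then show ?thesis unfolding gauss_log_riemann_def
    by (simp only:) (intro sums_mult sums_add summable_sums summable_gauss_log_samples h)
qed

definition KM_deriv :: "real \<Rightarrow> real \<Rightarrow> real \<Rightarrow> nat \<Rightarrow> nat \<Rightarrow> real \<Rightarrow> real" where
  "KM_deriv p cB B j k \<alpha> = (1 / Nj cB B j) *
     (\<Sum>l. (fp p (real (Suc l) / B ^ j))\<^sup>2 * (2 * real (Suc l) + 1) * real (Suc l) powr (- \<alpha>)
           * (- ln (real (Suc l))) ^ k)"

lemma KM_deriv_0: "KM_deriv p cB B j 0 = KM p cB B j"
  by (simp add: fun_eq_iff KM_deriv_def KM_def)

lemma KM_deriv_has_real_derivative:
  assumes "B > 0"
  shows "(KM_deriv p cB B j k has_real_derivative KM_deriv p cB B j (Suc k) \<alpha>) (at \<alpha>)"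
proof -
  define c where "c l = (fp p (real (Suc l) / B ^ j))\<^sup>2 * (2 * real (Suc l) + 1)" for l
  have "summable (\<lambda>l. c l * real (Suc l) powr r)" for r
    using summable_fp_squared_powr[of "1 / B ^ j" p r] assms by (simp add: c_def)
  then have "((\<lambda>x. \<Sum>l. c l * real (Suc l) powr (-x) * (- ln (real (Suc l))) ^ k) has_real_derivative
        (\<Sum>l. c l * real (Suc l) powr (-\<alpha>) * (- ln (real (Suc l))) ^ Suc k)) (at \<alpha>)"
    by (intro has_real_derivative_dirichlet_log_series) (simp_all add: c_def)
  then show ?thesis
    unfolding KM_deriv_def[abs_def] c_def by (rule DERIV_cmult)
qed

lemma KM_derivatives:
  assumes "B > 0"
  shows "KM p cB B j differentiable (at \<alpha>)" "deriv (KM p cB B j) = KM_deriv p cB B j 1"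
    and "deriv (KM p cB B j) differentiable (at \<alpha>)" "deriv (deriv (KM p cB B j)) = KM_deriv p cB B j 2"
proof -
  note D = KM_deriv_has_real_derivative[OF assms]
  show D1: "deriv (KM p cB B j) = KM_deriv p cB B j 1"
    using D[of p cB j 0] by (simp add: fun_eq_iff DERIV_imp_deriv KM_deriv_0[symmetric])
  show "deriv (deriv (KM p cB B j)) = KM_deriv p cB B j 2"
    using D[of p cB j 1] by (simp add: fun_eq_iff DERIV_imp_deriv D1 numeral_2_eq_2)
  show "KM p cB B j differentiable (at \<alpha>)" "deriv (KM p cB B j) differentiable (at \<alpha>)"
    using D[of p cB j 0 \<alpha>] D[of p cB j 1 \<alpha>] unfolding D1 KM_deriv_0 real_differentiable_def by auto
qed

lemma KM_deriv_eq_gauss_log_riemann: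
  fixes B cB :: real and j :: nat
  assumes B: "B > 0" and cB: "cB \<noteq> 0"
  defines "h \<equiv> 1 / B ^ j"
  shows "KM_deriv p cB B j k \<alpha> = (-1) ^ k * (h powr \<alpha> / cB) *
           (\<Sum>i\<le>k. of_nat (k choose i) * (real j * ln B) ^ (k - i) * gauss_log_riemann (4 * p + 1 - \<alpha>) i h)"
    (is "_ = ?Y")
proof -
  have h: "h > 0" using B by (simp add: h_def)
  define L where "L = real j * ln B"
  define c where "c = h\<^sup>2 / cB"
  define T where "T i n = c * ((fp p (n * h))\<^sup>2 * (2 * n + 1) * n powr (-\<alpha>) * ln (n * h) ^ i)" for i n
  have c: "c \<noteq> 0" using h cB by (simp add: c_def)
  have summand: "c * ((fp p (real (Suc l) * h))\<^sup>2 * (2 * real (Suc l) + 1) * real (Suc l) powr (-\<alpha>)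
        * (- ln (real (Suc l))) ^ k) = (-1) ^ k * (\<Sum>i\<le>k. of_nat (k choose i) * L ^ (k - i) * T i (real (Suc l)))"
    for l
  proof -
    define n where "n = real (Suc l)"
    have ln_n: "- ln n = - (ln (n * h) + L)"
      using B by (simp add: n_def h_def L_def ln_mult ln_div ln_realpow)
    have "(- ln n) ^ k = (-1) ^ k * (ln (n * h) + L) ^ k"
      unfolding ln_n by (rule power_minus)
    then show ?thesis
      unfolding n_def[symmetric] by (simp add: T_def binomial_ring sum_distrib_left mult_ac)
  qed
  have "(\<lambda>l. (-1) ^ k * (\<Sum>i\<le>k. of_nat (k choose i) * L ^ (k - i) * T i (real (Suc l))))
      sums ((-1) ^ k * (\<Sum>i\<le>k. of_nat (k choose i) * L ^ (k - i) * (h powr \<alpha> / cB * gauss_log_riemann (4 * p + 1 - \<alpha>) i h)))"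
    unfolding T_def c_def by (intro sums_mult sums_sum KM_summands_sums h)
  also have "(-1) ^ k * (\<Sum>i\<le>k. of_nat (k choose i) * L ^ (k - i) * (h powr \<alpha> / cB * gauss_log_riemann (4 * p + 1 - \<alpha>) i h))
      = c * (?Y / c)"
    using c by (simp add: L_def sum_distrib_left sum_divide_distrib mult_ac)
  finally have "(\<lambda>l. c * ((fp p (real (Suc l) * h))\<^sup>2 * (2 * real (Suc l) + 1) * real (Suc l) powr (-\<alpha>)
        * (- ln (real (Suc l))) ^ k)) sums (c * (?Y / c))"
    unfolding summand .
  then have "(\<lambda>l. (fp p (real (Suc l) * h))\<^sup>2 * (2 * real (Suc l) + 1) * real (Suc l) powr (-\<alpha>)
        * (- ln (real (Suc l))) ^ k) sums (?Y / c)"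
    unfolding sums_mult_iff[OF c] .
  moreover have "1 / Nj cB B j = c"
    by (simp add: Nj_def c_def h_def power_mult power2_eq_square mult.commute)
  ultimately show ?thesis
    using c by (simp add: KM_deriv_def sums_iff h_def)
qed

lemma KM_log_derivatives:
  fixes B cB p \<alpha> :: real and j :: nat
  assumes B: "B > 0" and cB: "cB \<noteq> 0"
  defines "h \<equiv> 1 / B ^ j" and "a \<equiv> 4 * p + 1 - \<alpha>" and "L \<equiv> real j * ln B"
  shows "KM p cB B j \<alpha> = h powr \<alpha> * (gauss_log_riemann a 0 h / cB)"
    and "deriv (KM p cB B j) \<alpha> = - (L + gauss_log_riemann a 1 h / gauss_log_riemann a 0 h) * KM p cB B j \<alpha>"
    and "deriv (deriv (KM p cB B j)) \<alpha> = (L\<^sup>2 + 2 * L * (gauss_log_riemann a 1 h / gauss_log_riemann a 0 h)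
           + gauss_log_riemann a 2 h / gauss_log_riemann a 0 h) * KM p cB B j \<alpha>"
proof -
  have R0: "gauss_log_riemann a 0 h \<noteq> 0"
    using gauss_log_riemann_0_pos[of h a] B by (simp add: h_def)
  note E = KM_deriv_eq_gauss_log_riemann[OF B cB, where j=j and p=p and \<alpha>=\<alpha>, folded h_def a_def L_def]
  show K: "KM p cB B j \<alpha> = h powr \<alpha> * (gauss_log_riemann a 0 h / cB)"
    using E[of 0] by (simp add: KM_deriv_0)
  show "deriv (KM p cB B j) \<alpha> = - (L + gauss_log_riemann a 1 h / gauss_log_riemann a 0 h) * KM p cB B j \<alpha>"
    using R0 cB unfolding K KM_derivatives(2)[OF B] E by (simp add: field_simps)
  show "deriv (deriv (KM p cB B j)) \<alpha> = (L\<^sup>2 + 2 * L * (gauss_log_riemann a 1 h / gauss_log_riemann a 0 h)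
      + gauss_log_riemann a 2 h / gauss_log_riemann a 0 h) * KM p cB B j \<alpha>"
    using R0 cB unfolding K KM_derivatives(4)[OF B] E
    by (simp add: numeral_2_eq_2 field_simps power2_eq_square)
qed

theorem proposition20:
  fixes B p cB \<alpha> :: real
  assumes "B > 1" and "p > 0" and "cB > 0" and "4 * p + 2 - \<alpha> > 0"
  shows "Ips p cB 0 \<alpha> = 2 powr (- (2 * p - \<alpha> / 2 + 1)) / cB * Gamma (2 * p + 1 - \<alpha> / 2) \<and>
         (\<exists>e. e \<longlonglongrightarrow> 0 \<and>
           (\<forall>j. KM p cB B j \<alpha> = (Ips p cB 0 \<alpha> + e j) * B powr (- \<alpha> * real j))) \<and>
         (\<forall>j. KM p cB B j differentiable (at \<alpha>)) \<and>
         (\<exists>e. e \<longlonglongrightarrow> 0 \<and>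
           (\<forall>j. deriv (KM p cB B j) \<alpha> =
                 - (real j * ln B + Ips p cB 1 \<alpha> / Ips p cB 0 \<alpha> + e j) * KM p cB B j \<alpha>)) \<and>
         (\<forall>j. deriv (KM p cB B j) differentiable (at \<alpha>)) \<and>
         (\<exists>e. e \<longlonglongrightarrow> 0 \<and>
           (\<forall>j. deriv (deriv (KM p cB B j)) \<alpha> =
                 ((real j)\<^sup>2 * (ln B)\<^sup>2 + 2 * real j * ln B * (Ips p cB 1 \<alpha> / Ips p cB 0 \<alpha>)
                  + Ips p cB 2 \<alpha> / Ips p cB 0 \<alpha> + e j) * KM p cB B j \<alpha>))"
proof -
  define a where "a = 4 * p + 1 - \<alpha>"
  define A where "A s j = gauss_log_riemann a s (1 / B ^ j) / cB" for s j
  define I where "I s = Ips p cB s \<alpha>" for s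
  have a: "a > -1" and cB: "cB \<noteq> 0" and B: "B > 0" using assms by (simp_all add: a_def)
  have err: "(\<lambda>j. A s j - I s) \<longlonglongrightarrow> 0" "(\<lambda>j. real j * (A s j - I s)) \<longlonglongrightarrow> 0" for s
    using gauss_log_riemann_tendsto[OF assms(1) a, of s, THEN tendsto_mult_right_zero, of "1 / cB"]
    by (simp_all add: A_def I_def Ips_eq_integral_gauss_log a_def algebra_simps diff_divide_distrib)
  have "Gamma (2 * p + 1 - \<alpha> / 2) > 0" using assms(4) by (intro Gamma_real_pos) simp
  then have I0: "I 0 \<noteq> 0" using Ips_0_eq_Gamma[OF assms(4)] cB by (simp add: I_def)
  have A_lim: "A s \<longlonglongrightarrow> I s" for s using err(1) by (rule LIM_zero_cancel)
  have ratio: "(\<lambda>j. A s j / A 0 j - I s / I 0) \<longlonglongrightarrow> 0"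
    "(\<lambda>j. real j * (A s j / A 0 j - I s / I 0)) \<longlonglongrightarrow> 0" for s
    using weighted_quotient_error_tendsto_0[of "\<lambda>_. 1", OF _ _ A_lim I0]
      weighted_quotient_error_tendsto_0[OF err(2) err(2) A_lim I0]
    by (simp_all add: err(1))
  have A_ratio: "A s j / A 0 j = gauss_log_riemann a s (1 / B ^ j) / gauss_log_riemann a 0 (1 / B ^ j)" for s j
    using cB by (simp add: A_def)
  have "B powr (- \<alpha> * real j) = (1 / B ^ j) powr \<alpha>" for j
    using B by (simp add: powr_realpow[symmetric] powr_powr powr_divide powr_minus_divide mult.commute)
  then have "KM p cB B j \<alpha> = (I 0 + (A 0 j - I 0)) * B powr (- \<alpha> * real j)"
    and "deriv (KM p cB B j) \<alpha> = - (real j * ln B + I 1 / I 0 + (A 1 j / A 0 j - I 1 / I 0)) * KM p cB B j \<alpha>"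
    and "deriv (deriv (KM p cB B j)) \<alpha> = ((real j)\<^sup>2 * (ln B)\<^sup>2 + 2 * real j * ln B * (I 1 / I 0) + I 2 / I 0
        + (2 * ln B * (real j * (A 1 j / A 0 j - I 1 / I 0)) + (A 2 j / A 0 j - I 2 / I 0))) * KM p cB B j \<alpha>" for j
    using KM_log_derivatives[OF B cB, where j=j and p=p and \<alpha>=\<alpha>]
    unfolding A_ratio[symmetric] a_def[symmetric] by (simp_all add: A_def algebra_simps power_mult_distrib)
  moreover have "(\<lambda>j. 2 * ln B * (real j * (A 1 j / A 0 j - I 1 / I 0)) + (A 2 j / A 0 j - I 2 / I 0)) \<longlonglongrightarrow> 0"
    using tendsto_add[OF tendsto_mult_right_zero[OF ratio(2)[of 1]] ratio(1)[of 2]] by simp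
  ultimately show ?thesis
    using Ips_0_eq_Gamma[OF assms(4)] KM_derivatives(1,3)[OF B] err(1)[of 0] ratio(1)[of 1]
    unfolding I_def by blast
qed

end
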